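(* Under the setting of the context, assume that all zeros of $T$ lie in $\mathbb{C}\setminus(\Delta_1\cup\Delta_m)$, that $f$ has exactly $D$ poles in $\mathbb{C}\setminus\Delta_m$, and that $n>N\ge D$. For each $j=0,\ldots,m-1$, $$\int x^\nu Q_{n,j+1}(x)\frac{\mathcal{H}_{n,j+1}(x)\,d\sigma_{j+1}(x)}{Q_{n,j}(x)Q_{n,j+2}(x)}=0,\qquad\nu=0,1,\ldots,n-D-1.$$ Moreover, for $j=0,2,3,\ldots,m-1$, $$\mathcal{H}_{n,j}(z)=\int\frac{Q_{n,j+1}^2(x)}{z-x}\frac{\mathcal{H}_{n,j+1}(x)\,d\sigma_{j+1}(x)}{Q_{n,j}(x)Q_{n,j+2}(x)},$$ and $$\mathcal{H}_{n,1}(z)=T(z)\int\frac{Q_{n,2}^2(x)}{z-x}\frac{\mathcal{H}_{n,2}(x)\,d\sigma_2(x)}{Q_{n,1}(x)Q_{n,3}(x)}.$$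
   Context: Cauchy transform: $\widehat{s}(z)=\int\frac{ds(x)}{z-x}$. For measures $\sigma_\alpha,\sigma_\beta$ on $\mathbb{R}$ with disjoint convex hulls of supports, $d\langle\sigma_\alpha,\sigma_\beta\rangle(x):=\widehat{\sigma}_\beta(x)d\sigma_\alpha(x)$. Setting: $m\ge1$; $\Delta_1,\ldots,\Delta_m$ bounded compact intervals of $\mathbb{R}$ with $\Delta_j\cap\Delta_{j+1}=\emptyset$; $\sigma_j$ a finite Borel measure of constant sign with infinite support whose convex hull is $\Delta_j$. For $1\le j\le k\le m$, $s_{j,k}=\langle\sigma_j,\langle\sigma_{j+1},\ldots,\sigma_k\rangle\rangle$, $s_{k,j}=\langle\sigma_k,\langle\sigma_{k-1},\ldots,\sigma_j\rangle\rangle$ ($s_{j,j}=\sigma_j$). $r_k=v_k/t_k$ rational with real coefficients, $t_k$ monic, $\deg v_k<\deg t_k$, $(v_k,t_k)=1$. $T=\operatorname{lcm}(t_1,\ldots,t_m)$, $D=\deg T$, $f:=\widehat{s}_{m,1}-\sum_{k=1}^{m-1}(-1)^k\widehat{s}_{m,k+1}r_k-(-1)^mr_m$. Multi-level Hermite–Padé polynomials: $a_{n,0},\ldots,a_{n,m}$, not all zero, $\deg a_{n,j}\le n-1$ ($j<m$), $\deg a_{n,m}\le n$, with, as $z\to\infty$, $\mathcal{A}_{n,0}:=a_{n,0}+\sum_{k=1}^m(-1)^ka_{n,k}(\widehat{s}_{1,k}+r_k)=O(z^{-n-1})$, $\mathcal{A}_{n,j}:=(-1)^ja_{n,j}+\sum_{k=j+1}^m(-1)^ka_{n,k}\widehat{s}_{j+1,k}=O(z^{-1})$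 ($1\le j\le m-1$); $\mathcal{A}_{n,m}:=(-1)^ma_{n,m}$. Under the stated assumptions on $T$ and $f$ it is known that there is $N\ge D$ such that for $n>N$: $\deg a_{n,m}=n$, the solution is unique up to a constant factor and normalized with $a_{n,m}$ monic; $a_{n,m}$ has exactly $n-D$ simple zeros on $\Delta_m$; for $1\le j\le m-1$, $\mathcal{A}_{n,j}$ has exactly $n-D$ zeros in $\mathbb{C}\setminus\Delta_{j+1}$, simple and in $\Delta_j$. $Q_{n,j}$ ($1\le j\le m$) is the monic polynomial of degree $n-D$ whose zeros are the zeros of $\mathcal{A}_{n,j}$ on $\Delta_j$; by convention $Q_{n,0}\equiv Q_{n,m+1}\equiv1$. $\mathcal{H}_{n,j}=Q_{n,j+1}T\mathcal{A}_{n,j}/Q_{n,j}$ for $j=0,1$ and $\mathcal{H}_{n,j}=Q_{n,j+1}\mathcal{A}_{n,j}/Q_{n,j}$ for $j=2,\ldots,m$. *)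

theory Defs
  imports "HOL-Complex_Analysis.Complex_Analysis" "HOL-Probability.Probability"
    "HOL-Computational_Algebra.Computational_Algebra" "HOL-Computational_Algebra.Field_as_Ring" "HOL-Library.Landau_Symbols"
begin

definition msupp :: "real measure \<Rightarrow> real set" where
  "msupp M = {x. \<forall>e>0. 0 < emeasure M (ball x e)}"

text \<open>A measure of constant sign is represented as sign c j (1 or -1) times the
  positive measure sigma j; this is integration against the signed measure.\<close>
definition sint :: "(nat \<Rightarrow> real measure) \<Rightarrow> (nat \<Rightarrow> real) \<Rightarrow> nat \<Rightarrow> (real \<Rightarrow> complex) \<Rightarrow> complex" where
  "sint \<sigma> c j g = complex_of_real (c j) * (\<integral>x. g x \<partial>(\<sigma> j))"

text \<open>Cauchy transform of the Nikishin measure s_{j,k} (both for j \<le> k and j > k).\<close>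
function shat :: "(nat \<Rightarrow> real measure) \<Rightarrow> (nat \<Rightarrow> real) \<Rightarrow> nat \<Rightarrow> nat \<Rightarrow> complex \<Rightarrow> complex" where
  "shat \<sigma> c j k z =
    (if j = k then sint \<sigma> c j (\<lambda>x. 1 / (z - complex_of_real x))
     else if j < k then sint \<sigma> c j (\<lambda>x. shat \<sigma> c (Suc j) k (complex_of_real x) / (z - complex_of_real x))
     else sint \<sigma> c j (\<lambda>x. shat \<sigma> c (j - 1) k (complex_of_real x) / (z - complex_of_real x)))"
  by pat_completeness auto
termination
  by (relation "Wellfounded.measure (\<lambda>(\<sigma>, c, j, k, z). if j \<le> k then k - j else j - k)") auto

definition pc :: "real poly \<Rightarrow> complex \<Rightarrow> complex" where
  "pc p z = poly (map_poly complex_of_real p) z"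

definition ratf :: "real poly \<Rightarrow> real poly \<Rightarrow> complex \<Rightarrow> complex" where
  "ratf v t z = pc v z / pc t z"

definition bigT :: "(nat \<Rightarrow> real poly) \<Rightarrow> nat \<Rightarrow> real poly" where
  "bigT t m = Lcm (t ` {1..m})"

definition ffun :: "(nat \<Rightarrow> real measure) \<Rightarrow> (nat \<Rightarrow> real) \<Rightarrow> (nat \<Rightarrow> real poly) \<Rightarrow> (nat \<Rightarrow> real poly)
    \<Rightarrow> nat \<Rightarrow> complex \<Rightarrow> complex" where
  "ffun \<sigma> c v t m z = shat \<sigma> c m 1 z
     - (\<Sum>k=1..m-1. (-1)^k * shat \<sigma> c m (k+1) z * ratf (v k) (t k) z)
     - (-1)^m * ratf (v m) (t m) z"

definition HPA :: "(nat \<Rightarrow> real measure) \<Rightarrow> (nat \<Rightarrow> real) \<Rightarrow> (nat \<Rightarrow> real poly) \<Rightarrow> (nat \<Rightarrow> real poly)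
    \<Rightarrow> nat \<Rightarrow> (nat \<Rightarrow> real poly) \<Rightarrow> nat \<Rightarrow> complex \<Rightarrow> complex" where
  "HPA \<sigma> c v t m a j z =
    (if j = 0 then pc (a 0) z
        + (\<Sum>k=1..m. (-1)^k * pc (a k) z * (shat \<sigma> c 1 k z + ratf (v k) (t k) z))
     else if j < m then (-1)^j * pc (a j) z
        + (\<Sum>k=Suc j..m. (-1)^k * pc (a k) z * shat \<sigma> c (Suc j) k z)
     else (-1)^m * pc (a m) z)"

definition HP_sol :: "(nat \<Rightarrow> real measure) \<Rightarrow> (nat \<Rightarrow> real) \<Rightarrow> (nat \<Rightarrow> real poly) \<Rightarrow> (nat \<Rightarrow> real poly)
    \<Rightarrow> nat \<Rightarrow> nat \<Rightarrow> (nat \<Rightarrow> real poly) \<Rightarrow> bool" where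
  "HP_sol \<sigma> c v t m n a \<longleftrightarrow>
     (\<exists>j\<le>m. a j \<noteq> 0) \<and>
     (\<forall>j<m. degree (a j) \<le> n - 1) \<and> degree (a m) \<le> n \<and>
     HPA \<sigma> c v t m a 0 \<in> O[at_infinity](\<lambda>z. 1 / z ^ (n + 1)) \<and>
     (\<forall>j. 1 \<le> j \<and> j \<le> m - 1 \<longrightarrow> HPA \<sigma> c v t m a j \<in> O[at_infinity](\<lambda>z. 1 / z))"

text \<open>The zero properties known for large n (Delta j are the intervals, D = deg T).\<close>
definition HP_zero_props :: "(nat \<Rightarrow> real measure) \<Rightarrow> (nat \<Rightarrow> real) \<Rightarrow> (nat \<Rightarrow> real poly) \<Rightarrow> (nat \<Rightarrow> real poly)
    \<Rightarrow> nat \<Rightarrow> (nat \<Rightarrow> real set) \<Rightarrow> nat \<Rightarrow> (nat \<Rightarrow> real poly) \<Rightarrow> bool" where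
  "HP_zero_props \<sigma> c v t m \<Delta> n a \<longleftrightarrow>
     (let D = degree (bigT t m) in
       finite {x \<in> \<Delta> m. poly (a m) x = 0} \<and>
       card {x \<in> \<Delta> m. poly (a m) x = 0} = n - D \<and>
       (\<forall>x \<in> \<Delta> m. poly (a m) x = 0 \<longrightarrow> order x (a m) = 1) \<and>
       (\<forall>j. 1 \<le> j \<and> j \<le> m - 1 \<longrightarrow>
          (let Z = {z. z \<notin> complex_of_real ` \<Delta> (Suc j) \<and> HPA \<sigma> c v t m a j z = 0} in
            finite Z \<and> card Z = n - D \<and> Z \<subseteq> complex_of_real ` \<Delta> j \<and>
            (\<forall>z\<in>Z. deriv (HPA \<sigma> c v t m a j) z \<noteq> 0))))"

definition HPQ :: "(nat \<Rightarrow> real measure) \<Rightarrow> (nat \<Rightarrow> real) \<Rightarrow> (nat \<Rightarrow> real poly) \<Rightarrow> (nat \<Rightarrow> real poly)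
    \<Rightarrow> nat \<Rightarrow> (nat \<Rightarrow> real set) \<Rightarrow> (nat \<Rightarrow> real poly) \<Rightarrow> nat \<Rightarrow> complex \<Rightarrow> complex" where
  "HPQ \<sigma> c v t m \<Delta> a j z =
    (if 1 \<le> j \<and> j \<le> m then
       (\<Prod>x\<in>{x \<in> \<Delta> j. HPA \<sigma> c v t m a j (complex_of_real x) = 0}. z - complex_of_real x)
     else 1)"

definition HPH :: "(nat \<Rightarrow> real measure) \<Rightarrow> (nat \<Rightarrow> real) \<Rightarrow> (nat \<Rightarrow> real poly) \<Rightarrow> (nat \<Rightarrow> real poly)
    \<Rightarrow> nat \<Rightarrow> (nat \<Rightarrow> real set) \<Rightarrow> (nat \<Rightarrow> real poly) \<Rightarrow> nat \<Rightarrow> complex \<Rightarrow> complex" where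
  "HPH \<sigma> c v t m \<Delta> a j z =
    (if j \<le> 1 then HPQ \<sigma> c v t m \<Delta> a (Suc j) z * pc (bigT t m) z * HPA \<sigma> c v t m a j z
                    / HPQ \<sigma> c v t m \<Delta> a j z
     else HPQ \<sigma> c v t m \<Delta> a (Suc j) z * HPA \<sigma> c v t m a j z / HPQ \<sigma> c v t m \<Delta> a j z)"

end

theory Submission
  imports Defs
begin

text \<open>
  For j < m let T_j = T if j = 0 and T_j = 1 otherwise, and let w_j = T_j A_{n,j+1} / Q_{n,j};
  this is a bounded function on Delta_{j+1}, where it equals Q_{n,j+1} H_{n,j+1} / (Q_{n,j} Q_{n,j+2}).
  Writing A_{n,j} in terms of the nested Cauchy transforms of the measures s_{j+1,k} shows that
  T_j A_{n,j}(z) - c_{j+1} Q_{n,j}(z) \<integral> w_j(x) / (z - x) d\<sigma>_{j+1}(x) is a polynomial (for j = 0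
  because t_k divides T). It vanishes at the zeros of Q_{n,j}, so it is Q_{n,j} times a polynomial
  tending to 0 at infinity, hence it is 0. Thus T_j A_{n,j} / Q_{n,j} is c_{j+1} times the Cauchy
  transform of w_j d\<sigma>_{j+1}. As the left-hand side is O(z^{-(n-D)-1}), the first n - D moments of
  w_j vanish: these are the orthogonality relations, and they allow the factor Q_{n,j+1}, of degree
  n - D, to be moved under the integral, which gives the integral representations.
\<close>

section \<open>Polynomials and decay at infinity\<close>

lemma eventually_nonzero_at_infinity: "eventually (\<lambda>z::'a::real_normed_vector. z \<noteq> 0) at_infinity"
  unfolding eventually_at_infinity by (intro exI[of _ 1]) auto

lemma eventually_notin_bounded_at_infinity:
  fixes K :: "'a::real_normed_vector set"
  assumes "bounded K"
  shows "eventually (\<lambda>z. z \<notin> K) at_infinity"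
proof -
  obtain b where "\<And>x. x \<in> K \<Longrightarrow> norm x \<le> b"
    using assms unfolding bounded_iff by blast
  then show ?thesis
    unfolding eventually_at_infinity by (intro exI[of _ "b + 1"]) force
qed

lemma eventually_poly_nonzero_at_infinity:
  fixes p :: "'a::real_normed_field poly"
  assumes "p \<noteq> 0"
  shows "eventually (\<lambda>z. poly p z \<noteq> 0) at_infinity"
  using tendsto_imp_eventually_ne[OF poly_divide_tendsto_aux, of p 0] assms
  by (auto elim: eventually_mono)

lemma poly_bigo_power_degree:
  fixes p :: "'a::real_normed_field poly"
  shows "poly p \<in> O[at_infinity](\<lambda>z. z ^ degree p)"
  by (rule bigoI_tendsto[OF poly_divide_tendsto_aux])
     (use eventually_nonzero_at_infinity in \<open>rule eventually_mono, simp\<close>)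

lemma inverse_poly_bigo_inverse_power_degree:
  fixes p :: "'a::real_normed_field poly"
  assumes "p \<noteq> 0"
  shows "(\<lambda>z. 1 / poly p z) \<in> O[at_infinity](\<lambda>z. 1 / z ^ degree p)"
proof (rule bigoI_tendsto)
  show "((\<lambda>z::'a. (1 / poly p z) / (1 / z ^ degree p)) \<longlongrightarrow> inverse (lead_coeff p)) at_infinity"
    using tendsto_inverse[OF poly_divide_tendsto_aux[of p]] assms by (simp add: divide_inverse_commute)
  show "eventually (\<lambda>z::'a. 1 / z ^ degree p \<noteq> 0) at_infinity"
    using eventually_nonzero_at_infinity by (rule eventually_mono) auto
qed

lemma poly_tendsto_0_at_infinity_imp_zero:
  fixes p :: "'a::real_normed_field poly"
  assumes "(poly p \<longlongrightarrow> 0) at_infinity"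
  shows "p = 0"
proof (cases "degree p = 0")
  case True
  then obtain a where a: "p = [:a:]" by (metis degree_eq_zeroE)
  then have "poly p = (\<lambda>_. a)" by auto
  with assms a show ?thesis by (simp add: tendsto_const_iff[OF trivial_limit_at_infinity])
next
  case False
  then show ?thesis
    using not_tendsto_and_filterlim_at_infinity[OF trivial_limit_at_infinity assms filterlim_poly_at_infinity] by simp
qed

lemma tendsto_0_if_bigo_inverse_power:
  fixes f :: "'a::real_normed_field \<Rightarrow> 'a"
  assumes "f \<in> O[at_infinity](\<lambda>z. 1 / z ^ Suc k)"
  shows "(f \<longlongrightarrow> 0) at_infinity"
proof -
  have "((\<lambda>z::'a. 1 / z ^ Suc k) \<longlongrightarrow> 0) at_infinity"
    by (intro tendsto_divide_0[OF tendsto_const] filterlim_power_at_infinity) simp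
  then have "(\<lambda>z::'a. 1 / z ^ Suc k) \<in> o[at_infinity](\<lambda>_. 1)"
    by (intro smalloI_tendsto) auto
  from smalloD_tendsto[OF landau_o.big_small_trans[OF assms this]] show ?thesis
    by simp
qed

lemma power_times_bigo_inverse_power:
  fixes f :: "'a::real_normed_field \<Rightarrow> 'a"
  assumes "f \<in> O[at_infinity](\<lambda>z. 1 / z ^ Suc r)" "i \<le> r"
  shows "(\<lambda>z. z ^ i * f z) \<in> O[at_infinity](\<lambda>z. 1 / z ^ Suc (r - i))"
proof -
  have "z ^ i * (1 / z ^ Suc r) = 1 / z ^ Suc (r - i)" for z :: 'a
  proof (cases "z = 0")
    case False
    have "z ^ Suc r = z ^ i * z ^ Suc (r - i)"
      using assms(2) by (simp flip: power_add add: Suc_diff_le)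
    with False show ?thesis by simp
  qed (cases i; simp)
  with landau_o.big.mult_left[OF assms(1), of "\<lambda>z. z ^ i"] show ?thesis
    by simp
qed

lemma prod_linear_factors_dvd:
  fixes P :: "'a::idom poly"
  assumes "finite R" "\<And>x. x \<in> R \<Longrightarrow> poly P x = 0"
  shows "(\<Prod>x\<in>R. [:- x, 1:]) dvd P"
  using assms
proof (induction R arbitrary: P rule: finite_induct)
  case (insert y R)
  then obtain S where S: "P = (\<Prod>x\<in>R. [:- x, 1:]) * S"
    by (meson dvdE insertCI)
  have nz: "poly (\<Prod>x\<in>R. [:- x, 1:]) y \<noteq> 0"
    using insert(1,2) by (auto simp: poly_prod prod_zero_iff)
  have "poly P y = 0"
    using insert.prems by simp
  with S nz have "poly S y = 0"
    by simp
  then have "[:- y, 1:] dvd S"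
    by (simp add: poly_eq_0_iff_dvd)
  then have "[:- y, 1:] * (\<Prod>x\<in>R. [:- x, 1:]) dvd P"
    unfolding S by (metis dvd_refl mult.commute mult_dvd_mono)
  with insert(1,2) show ?case
    by simp
qed simp

lemma pc_0 [simp]: "pc 0 z = 0"
  unfolding pc_def by simp

lemma pc_pCons: "pc (pCons a p) z = complex_of_real a + z * pc p z"
  unfolding pc_def by (simp add: map_poly_pCons)

lemma pc_add: "pc (p + q) z = pc p z + pc q z"
proof (induction p arbitrary: q)
  case (pCons a p)
  then show ?case
    by (cases q) (simp add: pc_pCons algebra_simps)
qed (simp add: pc_def)

lemma pc_smult: "pc (smult a p) z = complex_of_real a * pc p z"
  by (induction p) (auto simp: pc_pCons algebra_simps)

lemma pc_mult: "pc (p * q) z = pc p z * pc q z"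
  by (induction p) (auto simp: pc_pCons pc_add pc_smult algebra_simps)

lemma pc_1 [simp]: "pc 1 z = 1"
  unfolding pc_def by simp

lemma pc_sum: "pc (sum f I) z = (\<Sum>i\<in>I. pc (f i) z)"
  by (induction I rule: infinite_finite_induct) (auto simp: pc_add)

lemma pc_of_real: "pc p (complex_of_real x) = complex_of_real (poly p x)"
  unfolding pc_def by (induction p) (auto simp: map_poly_pCons)

lemma borel_measurable_pc: "(\<lambda>x. pc p (complex_of_real x)) \<in> borel_measurable borel"
  unfolding pc_def by (intro borel_measurable_continuous_onI continuous_intros)

section \<open>Cauchy transforms of measures with compact support\<close>

definition bounded_borel_on :: "real set \<Rightarrow> (real \<Rightarrow> complex) \<Rightarrow> bool" where
  "bounded_borel_on S h \<longleftrightarrow> h \<in> borel_measurable borel \<and> bounded (h ` S)"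

lemma bounded_borel_on_const: "bounded_borel_on S (\<lambda>_. a)"
  by (auto simp: bounded_borel_on_def bounded_iff)

lemma bounded_borel_on_add:
  "bounded_borel_on S f \<Longrightarrow> bounded_borel_on S g \<Longrightarrow> bounded_borel_on S (\<lambda>x. f x + g x)"
  unfolding bounded_borel_on_def by (auto intro: bounded_plus_comp)

lemma bounded_borel_on_mult:
  assumes "bounded_borel_on S f" "bounded_borel_on S g"
  shows "bounded_borel_on S (\<lambda>x. f x * g x)"
proof -
  obtain A B where A: "\<And>x. x \<in> S \<Longrightarrow> norm (f x) \<le> A" and B: "\<And>x. x \<in> S \<Longrightarrow> norm (g x) \<le> B"
    using assms unfolding bounded_borel_on_def bounded_iff by blast
  have "norm (f x * g x) \<le> A * B" if "x \<in> S" for x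
    unfolding norm_mult using A[OF that] B[OF that]
    by (intro mult_mono) (auto intro: order_trans[OF norm_ge_zero])
  with assms show ?thesis
    unfolding bounded_borel_on_def bounded_iff by auto
qed

lemma bounded_borel_on_sum:
  assumes "\<And>i. i \<in> I \<Longrightarrow> bounded_borel_on S (f i)"
  shows "bounded_borel_on S (\<lambda>x. \<Sum>i\<in>I. f i x)"
  using assms
  by (induction I rule: infinite_finite_induct) (auto intro: bounded_borel_on_const bounded_borel_on_add)

lemma bounded_borel_on_continuous:
  assumes "h \<in> borel_measurable borel" "continuous_on S h" "compact S"
  shows "bounded_borel_on S h"
  using assms compact_continuous_image compact_imp_bounded unfolding bounded_borel_on_def by blast

lemma bounded_borel_on_poly: "compact S \<Longrightarrow> bounded_borel_on S (\<lambda>x. poly p (complex_of_real x))"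
  by (intro bounded_borel_on_continuous borel_measurable_continuous_onI continuous_intros)

lemma bounded_borel_on_divide:
  assumes "bounded_borel_on S h" "compact S" "z \<notin> complex_of_real ` S"
  shows "bounded_borel_on S (\<lambda>x. h x / (z - complex_of_real x))"
proof -
  have "bounded_borel_on S (\<lambda>x. 1 / (z - complex_of_real x))"
    using assms(2,3) by (intro bounded_borel_on_continuous continuous_intros) (auto simp: image_iff)
  from bounded_borel_on_mult[OF assms(1) this] show ?thesis
    by simp
qed

definition cauchy_transform :: "real measure \<Rightarrow> (real \<Rightarrow> complex) \<Rightarrow> complex \<Rightarrow> complex" where
  "cauchy_transform M h z = (\<integral>x. h x / (z - complex_of_real x) \<partial>M)"

definition moment :: "real measure \<Rightarrow> (real \<Rightarrow> complex) \<Rightarrow> nat \<Rightarrow> complex" where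
  "moment M h k = (\<integral>x. complex_of_real x ^ k * h x \<partial>M)"

locale compactly_supported_measure = finite_measure M for M :: "real measure" +
  fixes S :: "real set"
  assumes sets_eq_borel: "sets M = sets borel" and compact: "compact S"
    and AE_in_support: "AE x in M. x \<in> S"
begin

lemma borel_measurable_M: "h \<in> borel_measurable borel \<Longrightarrow> h \<in> borel_measurable M"
  by (metis measurable_cong_sets[OF sets_eq_borel refl])

lemma integrable_if_bounded_borel_on:
  assumes "bounded_borel_on S h"
  shows "integrable M h"
proof -
  obtain B where B: "\<And>x. x \<in> S \<Longrightarrow> norm (h x) \<le> B"
    using assms unfolding bounded_borel_on_def bounded_iff by blast
  have "AE x in M. norm (h x) \<le> B"
    using AE_in_support by eventually_elim (rule B)
  with assms show ?thesis
    unfolding bounded_borel_on_def by (blast intro: integrable_const_bound borel_measurable_M)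
qed

lemma integral_cong_support:
  assumes "h \<in> borel_measurable borel" "g \<in> borel_measurable borel" "\<And>x. x \<in> S \<Longrightarrow> h x = g x"
  shows "integral\<^sup>L M h = integral\<^sup>L M g"
  using AE_in_support by (intro integral_cong_AE borel_measurable_M assms(1,2)) (auto intro: assms(3) elim: eventually_mono)

lemma cauchy_transform_cong:
  assumes "h \<in> borel_measurable borel" "g \<in> borel_measurable borel" "\<And>x. x \<in> S \<Longrightarrow> h x = g x"
  shows "cauchy_transform M h z = cauchy_transform M g z"
  unfolding cauchy_transform_def using assms by (intro integral_cong_support) auto

lemma cauchy_transform_sum:
  assumes "\<And>i. i \<in> I \<Longrightarrow> bounded_borel_on S (h i)" "z \<notin> complex_of_real ` S"
  shows "cauchy_transform M (\<lambda>x. \<Sum>i\<in>I. h i x) z = (\<Sum>i\<in>I. cauchy_transform M (h i) z)"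
  unfolding cauchy_transform_def sum_divide_distrib using assms compact
  by (intro Bochner_Integration.integral_sum integrable_if_bounded_borel_on bounded_borel_on_divide)

lemma cauchy_transform_cmult: "cauchy_transform M (\<lambda>x. a * h x) z = a * cauchy_transform M h z"
  unfolding cauchy_transform_def by (simp flip: integral_mult_right_zero)

lemma times_cauchy_transform:
  assumes "bounded_borel_on S h" "z \<notin> complex_of_real ` S"
  shows "z * cauchy_transform M h z
    = integral\<^sup>L M h + cauchy_transform M (\<lambda>x. complex_of_real x * h x) z"
proof -
  have xh: "bounded_borel_on S (\<lambda>x. complex_of_real x * h x)"
    using compact by (intro bounded_borel_on_mult bounded_borel_on_poly[of _ "[:0, 1:]", simplified] assms(1))
  have "z * cauchy_transform M h z = (\<integral>x. z * (h x / (z - complex_of_real x)) \<partial>M)"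
    unfolding cauchy_transform_def by (rule integral_mult_right_zero[symmetric])
  also have "\<dots> = (\<integral>x. h x + complex_of_real x * h x / (z - complex_of_real x) \<partial>M)"
  proof (rule integral_cong_support)
    show "(\<lambda>x. z * (h x / (z - complex_of_real x))) \<in> borel_measurable borel"
      using bounded_borel_on_mult[OF bounded_borel_on_const bounded_borel_on_divide[OF assms(1) compact assms(2)]]
      unfolding bounded_borel_on_def by blast
    show "(\<lambda>x. h x + complex_of_real x * h x / (z - complex_of_real x)) \<in> borel_measurable borel"
      using bounded_borel_on_add[OF assms(1) bounded_borel_on_divide[OF xh compact assms(2)]]
      unfolding bounded_borel_on_def by blast
    fix x assume "x \<in> S"
    then have "z - complex_of_real x \<noteq> 0" using assms(2) by auto
    then show "z * (h x / (z - complex_of_real x)) = h x + complex_of_real x * h x / (z - complex_of_real x)"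
      by (simp add: field_simps)
  qed
  also have "\<dots> = integral\<^sup>L M h + cauchy_transform M (\<lambda>x. complex_of_real x * h x) z"
    unfolding cauchy_transform_def using assms xh compact
    by (intro Bochner_Integration.integral_add integrable_if_bounded_borel_on bounded_borel_on_divide)
  finally show ?thesis .
qed

lemma bounded_borel_on_power_times:
  "bounded_borel_on S h \<Longrightarrow> bounded_borel_on S (\<lambda>x. complex_of_real x ^ k * h x)"
  using bounded_borel_on_mult[OF bounded_borel_on_poly[OF compact, of "monom 1 k"]]
  by (simp add: poly_monom)

lemma power_times_cauchy_transform:
  assumes "bounded_borel_on S h" "z \<notin> complex_of_real ` S"
  shows "z ^ i * cauchy_transform M h z
    = (\<Sum>\<nu><i. z ^ (i - 1 - \<nu>) * moment M h \<nu>)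
      + cauchy_transform M (\<lambda>x. complex_of_real x ^ i * h x) z"
proof (induction i)
  case (Suc i)
  have "z ^ Suc i * cauchy_transform M h z
      = (\<Sum>\<nu><i. z * z ^ (i - 1 - \<nu>) * moment M h \<nu>)
        + z * cauchy_transform M (\<lambda>x. complex_of_real x ^ i * h x) z"
    using Suc by (simp add: algebra_simps sum_distrib_left)
  also have "z * cauchy_transform M (\<lambda>x. complex_of_real x ^ i * h x) z
      = moment M h i + cauchy_transform M (\<lambda>x. complex_of_real x ^ Suc i * h x) z"
    unfolding times_cauchy_transform[OF bounded_borel_on_power_times[OF assms(1)] assms(2)] moment_def
    by (simp add: mult.assoc)
  also have "(\<Sum>\<nu><i. z * z ^ (i - 1 - \<nu>) * moment M h \<nu>) = (\<Sum>\<nu><i. z ^ (Suc i - 1 - \<nu>) * moment M h \<nu>)"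
    by (intro sum.cong) (auto simp flip: power_Suc simp: Suc_diff_Suc)
  finally show ?case by (simp add: algebra_simps)
qed simp

definition (in -) cauchy_remainder :: "real measure \<Rightarrow> (real \<Rightarrow> complex) \<Rightarrow> complex poly \<Rightarrow> complex poly" where
  "cauchy_remainder M h p = (\<Sum>i\<le>degree p. \<Sum>\<nu><i. monom (coeff p i * moment M h \<nu>) (i - 1 - \<nu>))"

lemma poly_times_cauchy_transform:
  assumes "bounded_borel_on S h" "z \<notin> complex_of_real ` S"
  shows "poly p z * cauchy_transform M h z
    = cauchy_transform M (\<lambda>x. poly p (complex_of_real x) * h x) z + poly (cauchy_remainder M h p) z"
proof -
  have "poly p z * cauchy_transform M h z = (\<Sum>i\<le>degree p. coeff p i * (z ^ i * cauchy_transform M h z))"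
    by (simp add: poly_altdef sum_distrib_left sum_distrib_right mult_ac)
  also have "\<dots> = (\<Sum>i\<le>degree p. cauchy_transform M (\<lambda>x. coeff p i * (complex_of_real x ^ i * h x)) z)
      + (\<Sum>i\<le>degree p. \<Sum>\<nu><i. coeff p i * moment M h \<nu> * z ^ (i - 1 - \<nu>))"
    unfolding power_times_cauchy_transform[OF assms] cauchy_transform_cmult
    by (simp add: algebra_simps sum.distrib sum_distrib_left)
  also have "(\<Sum>i\<le>degree p. cauchy_transform M (\<lambda>x. coeff p i * (complex_of_real x ^ i * h x)) z)
      = cauchy_transform M (\<lambda>x. \<Sum>i\<le>degree p. coeff p i * (complex_of_real x ^ i * h x)) z"
    using assms
    by (intro cauchy_transform_sum[symmetric] bounded_borel_on_mult bounded_borel_on_const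
        bounded_borel_on_power_times)
  also have "(\<lambda>x. \<Sum>i\<le>degree p. coeff p i * (complex_of_real x ^ i * h x))
      = (\<lambda>x. poly p (complex_of_real x) * h x)"
    by (simp add: poly_altdef sum_distrib_left sum_distrib_right mult_ac)
  also have "(\<Sum>i\<le>degree p. \<Sum>\<nu><i. coeff p i * moment M h \<nu> * z ^ (i - 1 - \<nu>))
      = poly (cauchy_remainder M h p) z"
    by (simp add: cauchy_remainder_def poly_sum poly_monom)
  finally show ?thesis .
qed

lemma cauchy_remainder_eq_0:
  assumes "\<And>\<nu>. \<nu> < r \<Longrightarrow> moment M h \<nu> = 0" "degree p \<le> r"
  shows "cauchy_remainder M h p = 0"
  unfolding cauchy_remainder_def using assms by (intro sum.neutral ballI) auto

lemma cauchy_transform_poly_combination: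
  assumes "\<And>k. k \<in> K \<Longrightarrow> bounded_borel_on S (g k)"
    and "\<And>x. x \<in> S \<Longrightarrow> h x = (\<Sum>k\<in>K. poly (p k) (complex_of_real x) * g k x)"
    and "h \<in> borel_measurable borel" "z \<notin> complex_of_real ` S"
  shows "(\<Sum>k\<in>K. poly (p k) z * cauchy_transform M (g k) z)
    = cauchy_transform M h z + poly (\<Sum>k\<in>K. cauchy_remainder M (g k) (p k)) z"
proof -
  have pg: "bounded_borel_on S (\<lambda>x. poly (p k) (complex_of_real x) * g k x)" if "k \<in> K" for k
    using compact assms(1)[OF that] by (intro bounded_borel_on_mult bounded_borel_on_poly)
  have "bounded_borel_on S (\<lambda>x. \<Sum>k\<in>K. poly (p k) (complex_of_real x) * g k x)"
    by (intro bounded_borel_on_sum pg)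
  then have "cauchy_transform M h z = cauchy_transform M (\<lambda>x. \<Sum>k\<in>K. poly (p k) (complex_of_real x) * g k x) z"
    using assms(2,3) unfolding bounded_borel_on_def by (intro cauchy_transform_cong) auto
  also have "\<dots> = (\<Sum>k\<in>K. cauchy_transform M (\<lambda>x. poly (p k) (complex_of_real x) * g k x) z)"
    using pg assms(4) by (rule cauchy_transform_sum)
  finally show ?thesis
    using poly_times_cauchy_transform[OF assms(1) assms(4)] by (simp add: poly_sum sum.distrib)
qed

lemma norm_cauchy_transform_le:
  assumes "h \<in> borel_measurable borel" "\<And>x. x \<in> S \<Longrightarrow> norm (h x) \<le> B"
    and "0 < d" "\<And>x. x \<in> S \<Longrightarrow> d \<le> norm (z - complex_of_real x)"
  shows "norm (cauchy_transform M h z) \<le> B / d * measure M (space M)"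
proof -
  have z: "z \<notin> complex_of_real ` S"
    using assms(3,4) by force
  have h: "bounded_borel_on S h"
    using assms(1,2) unfolding bounded_borel_on_def bounded_iff by blast
  have bound: "norm (h x / (z - complex_of_real x)) \<le> B / d" if "x \<in> S" for x
    unfolding norm_divide using assms(2)[OF that] assms(3) assms(4)[OF that]
    by (meson frac_le norm_ge_zero order.trans)
  have "norm (cauchy_transform M h z) \<le> (\<integral>x. norm (h x / (z - complex_of_real x)) \<partial>M)"
    unfolding cauchy_transform_def by (rule integral_norm_bound)
  also have "\<dots> \<le> (\<integral>x. B / d \<partial>M)"
    using AE_in_support
    by (intro integral_mono_AE integrable_norm integrable_if_bounded_borel_on bounded_borel_on_divide
        h compact z integrable_const) (auto elim: eventually_mono intro: bound)
  finally show ?thesis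
    by (simp add: ac_simps)
qed

lemma cauchy_transform_bigo_inverse:
  assumes "bounded_borel_on S h"
  shows "cauchy_transform M h \<in> O[at_infinity](\<lambda>z. 1 / z)"
proof -
  obtain B where B: "\<And>x. x \<in> S \<Longrightarrow> norm (h x) \<le> B"
    using assms unfolding bounded_borel_on_def bounded_iff by blast
  obtain R where R: "\<And>x. x \<in> S \<Longrightarrow> norm x \<le> R" "R > 0"
    using compact_imp_bounded[OF compact] unfolding bounded_pos by blast
  have "eventually (\<lambda>z. norm (cauchy_transform M h z)
      \<le> 2 * B * measure M (space M) * norm (1 / z)) at_infinity"
    unfolding eventually_at_infinity
  proof (intro exI[of _ "2 * R"] allI impI)
    fix z :: complex assume z: "2 * R \<le> norm z"
    have "norm z / 2 \<le> norm (z - complex_of_real x)" if "x \<in> S" for x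
      using norm_triangle_ineq2[of z "complex_of_real x"] R(1)[OF that] z by simp
    then have "norm (cauchy_transform M h z) \<le> B / (norm z / 2) * measure M (space M)"
      using assms z R(2) unfolding bounded_borel_on_def
      by (intro norm_cauchy_transform_le B) auto
    then show "norm (cauchy_transform M h z) \<le> 2 * B * measure M (space M) * norm (1 / z)"
      by (simp add: norm_divide field_simps)
  qed
  then show ?thesis
    by (rule bigoI)
qed

lemma borel_measurable_cauchy_transform:
  assumes "h \<in> borel_measurable borel"
  shows "(\<lambda>x. cauchy_transform M h (complex_of_real x)) \<in> borel_measurable borel"
proof -
  have "(\<lambda>(x, y). h y / (complex_of_real x - complex_of_real y)) \<in> borel_measurable (borel \<Otimes>\<^sub>M borel)"
    using assms by measurable
  then have "(\<lambda>(x, y). h y / (complex_of_real x - complex_of_real y)) \<in> borel_measurable (borel \<Otimes>\<^sub>M M)"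
    by (metis measurable_cong_sets[OF sets_pair_measure_cong[OF refl sets_eq_borel] refl])
  then show ?thesis
    unfolding cauchy_transform_def
    by (rule borel_measurable_lebesgue_integral[of "\<lambda>x y. h y / (complex_of_real x - complex_of_real y)", simplified])
qed

lemma eventually_notin_support: "eventually (\<lambda>z. z \<notin> complex_of_real ` S) at_infinity"
  by (intro eventually_notin_bounded_at_infinity compact_imp_bounded compact_continuous_image
      continuous_intros compact)

lemma moment_eq_0_if_bigo:
  assumes h: "bounded_borel_on S h"
    and decay: "cauchy_transform M h \<in> O[at_infinity](\<lambda>z. 1 / z ^ Suc r)"
    and "\<nu> < r"
  shows "moment M h \<nu> = 0"
  using \<open>\<nu> < r\<close>
proof (induction \<nu> rule: less_induct)
  case (less k)
  let ?g = "\<lambda>z. z ^ Suc k * cauchy_transform M h z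
    - cauchy_transform M (\<lambda>x. complex_of_real x ^ Suc k * h x) z"
  have g_eq: "eventually (\<lambda>z. ?g z = moment M h k) at_infinity"
    using eventually_notin_support
  proof eventually_elim
    case (elim z)
    have "(\<Sum>\<nu><k. z ^ (Suc k - 1 - \<nu>) * moment M h \<nu>) = 0"
      using less by (intro sum.neutral) auto
    with power_times_cauchy_transform[OF h elim, of "Suc k"] show ?case
      by simp
  qed
  have "(?g \<longlongrightarrow> 0 - 0) at_infinity"
  proof (rule tendsto_diff)
    show "((\<lambda>z. z ^ Suc k * cauchy_transform M h z) \<longlongrightarrow> 0) at_infinity"
      using less.prems by (intro tendsto_0_if_bigo_inverse_power[OF power_times_bigo_inverse_power[OF decay]]) simp
    show "(cauchy_transform M (\<lambda>x. complex_of_real x ^ Suc k * h x) \<longlongrightarrow> 0) at_infinity"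
      using cauchy_transform_bigo_inverse[OF bounded_borel_on_power_times[OF h], of "Suc k"]
      by (intro tendsto_0_if_bigo_inverse_power[of _ 0]) simp
  qed
  from Lim_transform_eventually[OF this g_eq] show ?case
    by (simp add: tendsto_const_iff[OF trivial_limit_at_infinity])
qed

lemma bounded_borel_on_cauchy_transform:
  assumes "bounded_borel_on S h" "compact K" "K \<inter> S = {}"
  shows "bounded_borel_on K (\<lambda>x. cauchy_transform M h (complex_of_real x))"
proof -
  obtain B where B: "\<And>y. y \<in> S \<Longrightarrow> norm (h y) \<le> B" and h: "h \<in> borel_measurable borel"
    using assms(1) unfolding bounded_borel_on_def bounded_iff by blast
  obtain d where d: "d > 0" "\<And>x y. x \<in> K \<Longrightarrow> y \<in> S \<Longrightarrow> d \<le> dist x y"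
    using separate_compact_closed[OF assms(2) compact_imp_closed[OF compact] assms(3)] by blast
  have "norm (cauchy_transform M h (complex_of_real x)) \<le> B / d * measure M (space M)" if "x \<in> K" for x
    using d that by (intro norm_cauchy_transform_le[OF h B]) (auto simp flip: of_real_diff simp: dist_real_def)
  then show ?thesis
    using borel_measurable_cauchy_transform[OF h] unfolding bounded_borel_on_def bounded_iff by blast
qed

end

lemma AE_in_msupp:
  assumes "sets M = sets borel"
  shows "AE x in M. x \<in> msupp M"
proof -
  define I where "I = {(q, \<rho>). q \<in> \<rat> \<and> \<rho> \<in> \<rat> \<and> emeasure M (ball q \<rho>) = 0}"
  have "I \<subseteq> \<rat> \<times> \<rat>"
    unfolding I_def by auto
  then have "countable I"
    using countable_SIGMA[OF countable_rat countable_rat] countable_subset by blast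
  then have null: "(\<Union>p\<in>I. ball (fst p) (snd p)) \<in> null_sets M"
  proof (rule null_sets_UN')
    show "ball (fst p) (snd p) \<in> null_sets M" if "p \<in> I" for p
      using that assms unfolding I_def by (auto simp: null_sets_def)
  qed
  have "{x \<in> space M. x \<notin> msupp M} \<subseteq> (\<Union>p\<in>I. ball (fst p) (snd p))"
  proof
    fix x assume "x \<in> {x \<in> space M. x \<notin> msupp M}"
    then obtain e where e: "e > 0" "emeasure M (ball x e) = 0"
      unfolding msupp_def by (auto simp: not_gr_zero)
    obtain q where q: "q \<in> \<rat>" "x - e/3 < q" "q < x + e/3"
      using Rats_dense_in_real[of "x - e/3" "x + e/3"] e by auto
    obtain \<rho> where \<rho>: "\<rho> \<in> \<rat>" "e/3 < \<rho>" "\<rho> < 2*e/3"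
      using Rats_dense_in_real[of "e/3" "2*e/3"] e by auto
    have "ball q \<rho> \<subseteq> ball x e"
      using q \<rho> by (auto simp: dist_real_def)
    then have "emeasure M (ball q \<rho>) \<le> emeasure M (ball x e)"
      using assms by (intro emeasure_mono) auto
    with e q \<rho> have "(q, \<rho>) \<in> I" "x \<in> ball q \<rho>"
      unfolding I_def by (auto simp: dist_real_def)
    then show "x \<in> (\<Union>p\<in>I. ball (fst p) (snd p))" by force
  qed
  with null show ?thesis
    by (rule AE_I')
qed

lemma compactly_supported_measure_on_hull:
  assumes "sets M = sets borel" "finite_measure M" "convex hull (msupp M) = {\<alpha>..\<beta>}"
  shows "compactly_supported_measure M {\<alpha>..\<beta>}"
proof -
  interpret finite_measure M
    by (fact assms(2))
  have "msupp M \<subseteq> {\<alpha>..\<beta>}"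
    using hull_subset[of "msupp M" convex] assms(3) by simp
  then have "AE x in M. x \<in> {\<alpha>..\<beta>}"
    using AE_in_msupp[OF assms(1)] by (elim eventually_mono) blast
  with assms show ?thesis
    by (intro compactly_supported_measure.intro compactly_supported_measure_axioms.intro) auto
qed

section \<open>Nikishin systems\<close>

text \<open>The density of the measure s_{i,k} with respect to \<sigma>_i.\<close>

definition nikishin_density :: "(nat \<Rightarrow> real measure) \<Rightarrow> (nat \<Rightarrow> real) \<Rightarrow> nat \<Rightarrow> nat \<Rightarrow> real \<Rightarrow> complex" where
  "nikishin_density \<sigma> c i k x = (if i = k then 1 else shat \<sigma> c (Suc i) k (complex_of_real x))"

declare shat.simps [simp del]

lemma shat_eq_cauchy_transform:
  "i \<le> k \<Longrightarrow> shat \<sigma> c i k z = complex_of_real (c i) * cauchy_transform (\<sigma> i) (nikishin_density \<sigma> c i k) z"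
  by (subst shat.simps) (auto simp: sint_def cauchy_transform_def nikishin_density_def)

locale nikishin_system =
  fixes m :: nat and \<Delta> :: "nat \<Rightarrow> real set" and \<sigma> :: "nat \<Rightarrow> real measure" and c :: "nat \<Rightarrow> real"
  assumes compactly_supported: "\<And>j. j \<in> {1..m} \<Longrightarrow> compactly_supported_measure (\<sigma> j) (\<Delta> j)"
    and disjoint: "\<And>j. 1 \<le> j \<Longrightarrow> j < m \<Longrightarrow> \<Delta> j \<inter> \<Delta> (Suc j) = {}"
begin

lemma compact_Delta: "j \<in> {1..m} \<Longrightarrow> compact (\<Delta> j)"
  using compactly_supported compactly_supported_measure.compact by blast

lemma bounded_borel_on_nikishin_density:
  assumes "1 \<le> i" "i \<le> k" "k \<le> m"
  shows "bounded_borel_on (\<Delta> i) (nikishin_density \<sigma> c i k)"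
  using assms
proof (induction "k - i" arbitrary: i)
  case 0
  then show ?case
    by (simp add: nikishin_density_def bounded_borel_on_const)
next
  case (Suc d)
  interpret next_measure: compactly_supported_measure "\<sigma> (Suc i)" "\<Delta> (Suc i)"
    using Suc.prems Suc.hyps(2) by (intro compactly_supported) auto
  have "bounded_borel_on (\<Delta> i)
      (\<lambda>x. cauchy_transform (\<sigma> (Suc i)) (nikishin_density \<sigma> c (Suc i) k) (complex_of_real x))"
    using Suc by (intro next_measure.bounded_borel_on_cauchy_transform compact_Delta disjoint) auto
  then have "bounded_borel_on (\<Delta> i) (\<lambda>x. complex_of_real (c (Suc i))
      * cauchy_transform (\<sigma> (Suc i)) (nikishin_density \<sigma> c (Suc i) k) (complex_of_real x))"
    by (rule bounded_borel_on_mult[OF bounded_borel_on_const])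
  moreover have "nikishin_density \<sigma> c i k = (\<lambda>x. complex_of_real (c (Suc i))
      * cauchy_transform (\<sigma> (Suc i)) (nikishin_density \<sigma> c (Suc i) k) (complex_of_real x))"
    using Suc.hyps(2) by (auto simp: fun_eq_iff nikishin_density_def shat_eq_cauchy_transform)
  ultimately show ?case
    by simp
qed

end

section \<open>Multi-level Hermite-Pade forms\<close>

locale hermite_pade = nikishin_system +
  fixes v t :: "nat \<Rightarrow> real poly" and n :: nat and a :: "nat \<Rightarrow> real poly"
  assumes m_pos: "1 \<le> m"
    and c_nonzero: "\<And>j. j \<in> {1..m} \<Longrightarrow> c j \<noteq> 0"
    and t_nonzero: "\<And>k. k \<in> {1..m} \<Longrightarrow> t k \<noteq> 0"
    and degree_T_le: "degree (bigT t m) \<le> n"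
    and solution: "HP_sol \<sigma> c v t m n a"
    and zero_props: "HP_zero_props \<sigma> c v t m \<Delta> n a"
begin

abbreviation "A \<equiv> HPA \<sigma> c v t m a"
abbreviation "Q \<equiv> HPQ \<sigma> c v t m \<Delta> a"
abbreviation "H \<equiv> HPH \<sigma> c v t m \<Delta> a"
abbreviation "deg_Q \<equiv> n - degree (bigT t m)"

definition Q_roots :: "nat \<Rightarrow> real set" where
  "Q_roots j = {x \<in> \<Delta> j. A j (complex_of_real x) = 0}"

lemma Q_eq_prod: "Q j z = (if 1 \<le> j \<and> j \<le> m then \<Prod>x\<in>Q_roots j. z - complex_of_real x else 1)"
  unfolding HPQ_def Q_roots_def ..

lemma A_last: "A m z = (-1) ^ m * pc (a m) z"
  using m_pos unfolding HPA_def by simp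

lemma finite_card_Q_roots:
  assumes "1 \<le> j" "j \<le> m"
  shows "finite (Q_roots j) \<and> card (Q_roots j) = deg_Q"
proof (cases "j = m")
  case True
  have "Q_roots j = {x \<in> \<Delta> m. poly (a m) x = 0}"
    unfolding Q_roots_def True A_last pc_of_real by auto
  then show ?thesis
    using zero_props unfolding HP_zero_props_def Let_def by simp
next
  case False
  define Z where "Z = {z. z \<notin> complex_of_real ` \<Delta> (Suc j) \<and> A j z = 0}"
  have Z: "finite Z" "card Z = deg_Q" "Z \<subseteq> complex_of_real ` \<Delta> j"
    using zero_props False assms unfolding HP_zero_props_def Let_def Z_def by auto
  have "\<Delta> j \<inter> \<Delta> (Suc j) = {}"
    using disjoint False assms by simp
  then have "complex_of_real ` Q_roots j = Z"
    using Z(3) unfolding Q_roots_def Z_def by (auto simp: image_iff)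
  with Z show ?thesis
    by (metis card_image finite_imageD inj_of_real inj_on_subset subset_UNIV)
qed

definition Q_poly :: "nat \<Rightarrow> complex poly" where
  "Q_poly j = (if 1 \<le> j \<and> j \<le> m then \<Prod>x\<in>Q_roots j. [:- complex_of_real x, 1:] else 1)"

lemma poly_Q_poly: "poly (Q_poly j) z = Q j z"
  unfolding Q_eq_prod Q_poly_def by (simp add: poly_prod)

lemma Q_poly_nonzero: "Q_poly j \<noteq> 0"
  by (cases "finite (Q_roots j)") (auto simp: Q_poly_def)

lemma degree_Q_poly: "1 \<le> j \<Longrightarrow> j \<le> m \<Longrightarrow> degree (Q_poly j) = deg_Q"
  using finite_card_Q_roots by (simp add: Q_poly_def degree_prod_eq_sum_degree)

lemma degree_Q_poly_le: "degree (Q_poly j) \<le> deg_Q"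
  using degree_Q_poly by (cases "1 \<le> j \<and> j \<le> m") (auto simp: Q_poly_def)

lemma Q_zero_iff: "Q j (complex_of_real x) = 0 \<longleftrightarrow> 1 \<le> j \<and> j \<le> m \<and> x \<in> Q_roots j"
  using finite_card_Q_roots[of j] by (auto simp: Q_eq_prod prod_zero_iff)

lemma Q_nonzero_outside: "x \<notin> \<Delta> j \<Longrightarrow> Q j (complex_of_real x) \<noteq> 0"
  unfolding Q_zero_iff Q_roots_def by blast

lemma A_zero_if_Q_zero: "Q j (complex_of_real x) = 0 \<Longrightarrow> A j (complex_of_real x) = 0"
  unfolding Q_zero_iff Q_roots_def by blast

lemma Q_nonzero_on_next_interval:
  assumes "j < m" "x \<in> \<Delta> (Suc j)"
  shows "Q j (complex_of_real x) \<noteq> 0" "Q (Suc (Suc j)) (complex_of_real x) \<noteq> 0"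
proof -
  show "Q j (complex_of_real x) \<noteq> 0"
    using assms disjoint[of j] Q_nonzero_outside[of x j] by (cases "j = 0") (auto simp: Q_eq_prod)
  show "Q (Suc (Suc j)) (complex_of_real x) \<noteq> 0"
    using assms disjoint[of "Suc j"] Q_nonzero_outside[of x "Suc (Suc j)"]
    by (cases "Suc (Suc j) \<le> m") (auto simp: Q_eq_prod)
qed

lemma A_Suc_eq_sum:
  assumes "j < m"
  shows "A (Suc j) (complex_of_real x)
    = (\<Sum>k\<in>{Suc j..m}. (-1) ^ k * pc (a k) (complex_of_real x) * nikishin_density \<sigma> c (Suc j) k x)"
proof (cases "Suc j = m")
  case True
  then show ?thesis
    using A_last by (simp add: nikishin_density_def)
next
  case False
  with assms show ?thesis
    unfolding HPA_def
    by (simp add: sum.atLeast_Suc_atMost nikishin_density_def)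
qed

definition T_factor :: "nat \<Rightarrow> real poly" where
  "T_factor j = (if j = 0 then bigT t m else 1)"

definition weight :: "nat \<Rightarrow> real \<Rightarrow> complex" where
  "weight j x = pc (T_factor j) (complex_of_real x) * A (Suc j) (complex_of_real x) / Q j (complex_of_real x)"

definition weight_coeff :: "nat \<Rightarrow> nat \<Rightarrow> complex poly" where
  "weight_coeff j k = map_poly complex_of_real (smult ((-1) ^ k) (T_factor j * a k))"

lemma poly_weight_coeff: "poly (weight_coeff j k) z = (-1) ^ k * pc (T_factor j) z * pc (a k) z"
  unfolding weight_coeff_def pc_def[symmetric] by (simp add: pc_smult pc_mult)

lemma Q_times_weight_eq_sum:
  assumes "j < m" "x \<in> \<Delta> (Suc j)"
  shows "poly (Q_poly j) (complex_of_real x) * weight j x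
    = (\<Sum>k\<in>{Suc j..m}. poly (weight_coeff j k) (complex_of_real x) * nikishin_density \<sigma> c (Suc j) k x)"
proof -
  have "poly (Q_poly j) (complex_of_real x) * weight j x
      = pc (T_factor j) (complex_of_real x) * A (Suc j) (complex_of_real x)"
    using Q_nonzero_on_next_interval(1)[OF assms] by (simp add: weight_def poly_Q_poly)
  then show ?thesis
    by (simp add: A_Suc_eq_sum[OF assms(1)] poly_weight_coeff sum_distrib_left mult_ac)
qed

lemma bounded_borel_on_weight:
  assumes "j < m"
  shows "bounded_borel_on (\<Delta> (Suc j)) (weight j)"
proof -
  have compact: "compact (\<Delta> (Suc j))"
    using assms by (intro compact_Delta) auto
  have "bounded_borel_on (\<Delta> (Suc j)) (\<lambda>x. pc (a k) (complex_of_real x) * nikishin_density \<sigma> c (Suc j) k x)"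
    if "k \<in> {Suc j..m}" for k
    using that compact unfolding pc_def
    by (intro bounded_borel_on_mult bounded_borel_on_poly bounded_borel_on_nikishin_density) auto
  then have A: "bounded_borel_on (\<Delta> (Suc j)) (\<lambda>x. A (Suc j) (complex_of_real x))"
    unfolding A_Suc_eq_sum[OF assms]
    by (auto simp: mult.assoc intro!: bounded_borel_on_sum bounded_borel_on_mult[OF bounded_borel_on_const])
  have "bounded_borel_on (\<Delta> (Suc j)) (\<lambda>x. 1 / poly (Q_poly j) (complex_of_real x))"
  proof (rule bounded_borel_on_continuous[OF _ _ compact])
    show "(\<lambda>x. 1 / poly (Q_poly j) (complex_of_real x)) \<in> borel_measurable borel"
      by (intro borel_measurable_divide borel_measurable_const borel_measurable_continuous_onI continuous_intros)
    show "continuous_on (\<Delta> (Suc j)) (\<lambda>x. 1 / poly (Q_poly j) (complex_of_real x))"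
      using Q_nonzero_on_next_interval(1)[OF assms] by (intro continuous_intros) (auto simp: poly_Q_poly)
  qed
  with A compact show ?thesis
    unfolding weight_def poly_Q_poly pc_def
    by (auto simp: divide_inverse intro!: bounded_borel_on_mult bounded_borel_on_poly)
qed

lemma T_times_ratf:
  assumes "k \<in> {1..m}" "pc (bigT t m) z \<noteq> 0"
  shows "pc (bigT t m) z * ratf (v k) (t k) z = pc (v k * (bigT t m div t k)) z"
proof -
  have "t k dvd bigT t m"
    unfolding bigT_def using assms(1) by (intro dvd_Lcm) auto
  then have T: "pc (bigT t m) z = pc (t k) z * pc (bigT t m div t k) z"
    by (metis dvd_mult_div_cancel pc_mult)
  with assms(2) have "pc (t k) z \<noteq> 0"
    by auto
  with T show ?thesis
    unfolding ratf_def pc_mult by (simp add: field_simps)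
qed

lemma T_times_A_0_eq:
  assumes T: "pc (bigT t m) z \<noteq> 0"
  shows "pc (bigT t m) z * A 0 z
    = pc (bigT t m * a 0 + (\<Sum>k\<in>{1..m}. smult ((-1) ^ k) (a k * (v k * (bigT t m div t k))))) z
      + complex_of_real (c 1) * (\<Sum>k\<in>{1..m}. poly (weight_coeff 0 k) z
        * cauchy_transform (\<sigma> 1) (nikishin_density \<sigma> c 1 k) z)"
proof -
  have "pc (bigT t m) z * A 0 z = pc (bigT t m) z * pc (a 0) z
      + (\<Sum>k\<in>{1..m}. (-1) ^ k * pc (a k) z * (pc (bigT t m) z * ratf (v k) (t k) z))
      + complex_of_real (c 1) * (\<Sum>k\<in>{1..m}. poly (weight_coeff 0 k) z
        * cauchy_transform (\<sigma> 1) (nikishin_density \<sigma> c 1 k) z)"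
    unfolding HPA_def
    by (simp add: shat_eq_cauchy_transform poly_weight_coeff T_factor_def algebra_simps
        sum_distrib_left sum.distrib)
  also have "pc (bigT t m) z * pc (a 0) z
      + (\<Sum>k\<in>{1..m}. (-1) ^ k * pc (a k) z * (pc (bigT t m) z * ratf (v k) (t k) z))
      = pc (bigT t m * a 0 + (\<Sum>k\<in>{1..m}. smult ((-1) ^ k) (a k * (v k * (bigT t m div t k))))) z"
    using T_times_ratf[OF _ T] by (simp add: pc_add pc_sum pc_smult pc_mult mult_ac)
  finally show ?thesis .
qed

lemma A_eq_cauchy_transforms:
  assumes "1 \<le> j" "j < m"
  shows "A j z = pc (smult ((-1) ^ j) (a j)) z
    + complex_of_real (c (Suc j)) * (\<Sum>k\<in>{Suc j..m}. poly (weight_coeff j k) z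
      * cauchy_transform (\<sigma> (Suc j)) (nikishin_density \<sigma> c (Suc j) k) z)"
  using assms unfolding HPA_def
  by (simp add: pc_smult shat_eq_cauchy_transform poly_weight_coeff T_factor_def algebra_simps
      sum_distrib_left)

lemma T_factor_times_A_eq_cauchy_transforms:
  assumes "j < m"
  obtains E where "\<And>z. (j = 0 \<longrightarrow> pc (bigT t m) z \<noteq> 0) \<Longrightarrow> pc (T_factor j) z * A j z
    = poly E z + complex_of_real (c (Suc j)) * (\<Sum>k\<in>{Suc j..m}. poly (weight_coeff j k) z
        * cauchy_transform (\<sigma> (Suc j)) (nikishin_density \<sigma> c (Suc j) k) z)"
proof (cases "j = 0")
  case True
  then show ?thesis
    using that[of "map_poly complex_of_real (bigT t m * a 0
      + (\<Sum>k\<in>{1..m}. smult ((-1) ^ k) (a k * (v k * (bigT t m div t k)))))"]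
    by (simp add: T_times_A_0_eq T_factor_def pc_def[symmetric])
next
  case False
  with assms show ?thesis
    using that[of "map_poly complex_of_real (smult ((-1) ^ j) (a j))"]
    by (simp add: A_eq_cauchy_transforms T_factor_def pc_def[symmetric])
qed

lemma T_factor_times_A_minus_cauchy_transform_is_poly:
  assumes "j < m"
  obtains P where "\<And>z. z \<notin> complex_of_real ` \<Delta> (Suc j) \<Longrightarrow> (j = 0 \<longrightarrow> pc (bigT t m) z \<noteq> 0) \<Longrightarrow>
    pc (T_factor j) z * A j z - complex_of_real (c (Suc j)) * (Q j z * cauchy_transform (\<sigma> (Suc j)) (weight j) z)
      = poly P z"
proof -
  interpret next_measure: compactly_supported_measure "\<sigma> (Suc j)" "\<Delta> (Suc j)"
    using assms by (intro compactly_supported) auto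
  obtain E where E: "\<And>z. (j = 0 \<longrightarrow> pc (bigT t m) z \<noteq> 0) \<Longrightarrow> pc (T_factor j) z * A j z
    = poly E z + complex_of_real (c (Suc j)) * (\<Sum>k\<in>{Suc j..m}. poly (weight_coeff j k) z
        * cauchy_transform (\<sigma> (Suc j)) (nikishin_density \<sigma> c (Suc j) k) z)"
    using T_factor_times_A_eq_cauchy_transforms[OF assms] by blast
  define R1 where "R1 = (\<Sum>k\<in>{Suc j..m}.
    cauchy_remainder (\<sigma> (Suc j)) (nikishin_density \<sigma> c (Suc j) k) (weight_coeff j k))"
  define R2 where "R2 = cauchy_remainder (\<sigma> (Suc j)) (weight j) (Q_poly j)"
  have G: "bounded_borel_on (\<Delta> (Suc j)) (nikishin_density \<sigma> c (Suc j) k)" if "k \<in> {Suc j..m}" for k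
    using that by (intro bounded_borel_on_nikishin_density) auto
  have Qw: "bounded_borel_on (\<Delta> (Suc j)) (\<lambda>x. poly (Q_poly j) (complex_of_real x) * weight j x)"
    using assms by (intro bounded_borel_on_mult bounded_borel_on_poly bounded_borel_on_weight next_measure.compact)
  show ?thesis
  proof (rule that[of "E + smult (complex_of_real (c (Suc j))) (R1 - R2)"])
    fix z assume z: "z \<notin> complex_of_real ` \<Delta> (Suc j)" and T: "j = 0 \<longrightarrow> pc (bigT t m) z \<noteq> 0"
    have "(\<Sum>k\<in>{Suc j..m}. poly (weight_coeff j k) z
        * cauchy_transform (\<sigma> (Suc j)) (nikishin_density \<sigma> c (Suc j) k) z)
      = cauchy_transform (\<sigma> (Suc j)) (\<lambda>x. poly (Q_poly j) (complex_of_real x) * weight j x) z + poly R1 z"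
      unfolding R1_def using Qw
      by (intro next_measure.cauchy_transform_poly_combination[OF G Q_times_weight_eq_sum[OF assms] _ z])
        (auto simp: bounded_borel_on_def)
    moreover have "Q j z * cauchy_transform (\<sigma> (Suc j)) (weight j) z
      = cauchy_transform (\<sigma> (Suc j)) (\<lambda>x. poly (Q_poly j) (complex_of_real x) * weight j x) z + poly R2 z"
      unfolding R2_def poly_Q_poly[symmetric]
      by (rule next_measure.poly_times_cauchy_transform[OF bounded_borel_on_weight[OF assms] z])
    ultimately show "pc (T_factor j) z * A j z
      - complex_of_real (c (Suc j)) * (Q j z * cauchy_transform (\<sigma> (Suc j)) (weight j) z)
      = poly (E + smult (complex_of_real (c (Suc j))) (R1 - R2)) z"
      using E[OF T] by (simp add: algebra_simps)
  qed
qed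

text \<open>The quotient H_{n,j} / Q_{n,j+1}, except that for j = 1 the factor T is dropped.\<close>

definition reduced_H :: "nat \<Rightarrow> complex \<Rightarrow> complex" where
  "reduced_H j z = pc (T_factor j) z * A j z / Q j z"

lemma reduced_H_bigo:
  assumes "j < m"
  shows "reduced_H j \<in> O[at_infinity](\<lambda>z. 1 / z ^ Suc deg_Q)"
proof (cases "j = 0")
  case True
  have "A 0 \<in> O[at_infinity](\<lambda>z. 1 / z ^ Suc n)"
    using solution unfolding HP_sol_def by simp
  then have A: "(\<lambda>z. z ^ degree (bigT t m) * A 0 z) \<in> O[at_infinity](\<lambda>z. 1 / z ^ Suc deg_Q)"
    using degree_T_le by (rule power_times_bigo_inverse_power)
  have "pc (bigT t m) \<in> O[at_infinity](\<lambda>z. z ^ degree (bigT t m))"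
    using poly_bigo_power_degree[of "map_poly complex_of_real (bigT t m)"]
    by (simp add: pc_def[abs_def] degree_map_poly)
  then have "(\<lambda>z. pc (bigT t m) z * A 0 z) \<in> O[at_infinity](\<lambda>z. z ^ degree (bigT t m) * A 0 z)"
    by (rule landau_o.big.mult_right)
  also note A
  finally show ?thesis
    using True by (simp add: reduced_H_def[abs_def] T_factor_def Q_eq_prod)
next
  case False
  have "A j \<in> O[at_infinity](\<lambda>z. 1 / z)"
    using solution False assms unfolding HP_sol_def by simp
  moreover have "(\<lambda>z. 1 / poly (Q_poly j) z) \<in> O[at_infinity](\<lambda>z. 1 / z ^ deg_Q)"
    using inverse_poly_bigo_inverse_power_degree[OF Q_poly_nonzero, of j] False assms
    by (simp add: degree_Q_poly)
  ultimately have "(\<lambda>z. A j z * (1 / poly (Q_poly j) z)) \<in> O[at_infinity](\<lambda>z. 1 / z * (1 / z ^ deg_Q))"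
    by (rule landau_o.big.mult)
  then show ?thesis
    using False by (simp add: reduced_H_def[abs_def] T_factor_def poly_Q_poly)
qed

lemma eventually_regular_point:
  assumes "j < m"
  shows "eventually (\<lambda>z. z \<notin> complex_of_real ` \<Delta> (Suc j) \<and> Q j z \<noteq> 0 \<and> pc (bigT t m) z \<noteq> 0) at_infinity"
proof -
  interpret next_measure: compactly_supported_measure "\<sigma> (Suc j)" "\<Delta> (Suc j)"
    using assms by (intro compactly_supported) auto
  have "bigT t m \<noteq> 0"
    using t_nonzero unfolding bigT_def by (auto simp: Lcm_0_iff)
  then have "eventually (\<lambda>z. pc (bigT t m) z \<noteq> 0) at_infinity"
    unfolding pc_def by (intro eventually_poly_nonzero_at_infinity) (simp add: map_poly_eq_0_iff)
  moreover have "eventually (\<lambda>z. Q j z \<noteq> 0) at_infinity"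
    using eventually_poly_nonzero_at_infinity[OF Q_poly_nonzero] by (simp add: poly_Q_poly)
  ultimately show ?thesis
    using next_measure.eventually_notin_support by eventually_elim blast
qed

lemma Q_poly_dvd:
  assumes j: "j < m"
    and P: "\<And>z. z \<notin> complex_of_real ` \<Delta> (Suc j) \<Longrightarrow> (j = 0 \<longrightarrow> pc (bigT t m) z \<noteq> 0) \<Longrightarrow>
      pc (T_factor j) z * A j z - complex_of_real (c (Suc j)) * (Q j z * cauchy_transform (\<sigma> (Suc j)) (weight j) z)
        = poly P z"
  shows "Q_poly j dvd P"
proof (cases "j = 0")
  case False
  then have "Q_poly j = (\<Prod>y\<in>complex_of_real ` Q_roots j. [:- y, 1:])"
    using j by (simp add: Q_poly_def prod.reindex inj_on_def)
  also have "\<dots> dvd P"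
  proof (rule prod_linear_factors_dvd)
    show "finite (complex_of_real ` Q_roots j)"
      using finite_card_Q_roots[of j] False j by simp
    fix y assume "y \<in> complex_of_real ` Q_roots j"
    then obtain x where x: "y = complex_of_real x" "x \<in> Q_roots j"
      by blast
    then have "Q j y = 0" "A j y = 0" "y \<notin> complex_of_real ` \<Delta> (Suc j)"
      using False j disjoint[of j] Q_zero_iff[of j x] unfolding Q_roots_def by auto
    then show "poly P y = 0"
      using P[of y] False by simp
  qed
  finally show ?thesis .
qed (simp add: Q_poly_def)

lemma reduced_H_eq_cauchy_transform:
  assumes j: "j < m" and z: "z \<notin> complex_of_real ` \<Delta> (Suc j)" "Q j z \<noteq> 0"
    and T: "j = 0 \<longrightarrow> pc (bigT t m) z \<noteq> 0"
  shows "reduced_H j z = complex_of_real (c (Suc j)) * cauchy_transform (\<sigma> (Suc j)) (weight j) z"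
proof -
  interpret next_measure: compactly_supported_measure "\<sigma> (Suc j)" "\<Delta> (Suc j)"
    using j by (intro compactly_supported) auto
  obtain P where P: "\<And>z. z \<notin> complex_of_real ` \<Delta> (Suc j) \<Longrightarrow> (j = 0 \<longrightarrow> pc (bigT t m) z \<noteq> 0) \<Longrightarrow>
    pc (T_factor j) z * A j z - complex_of_real (c (Suc j)) * (Q j z * cauchy_transform (\<sigma> (Suc j)) (weight j) z)
      = poly P z"
    using T_factor_times_A_minus_cauchy_transform_is_poly[OF j] by blast
  have "Q_poly j dvd P"
    using j P by (rule Q_poly_dvd)
  then obtain S where S: "P = Q_poly j * S" ..
  have ev: "eventually (\<lambda>z. reduced_H j z
      - complex_of_real (c (Suc j)) * cauchy_transform (\<sigma> (Suc j)) (weight j) z = poly S z) at_infinity"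
    using eventually_regular_point[OF j]
  proof eventually_elim
    case (elim z)
    then have "Q j z * poly S z = Q j z * (reduced_H j z
        - complex_of_real (c (Suc j)) * cauchy_transform (\<sigma> (Suc j)) (weight j) z)"
      using P[of z] unfolding S reduced_H_def poly_mult poly_Q_poly by (simp add: field_simps)
    with elim show ?case
      by simp
  qed
  have lim: "((\<lambda>z. reduced_H j z
      - complex_of_real (c (Suc j)) * cauchy_transform (\<sigma> (Suc j)) (weight j) z) \<longlongrightarrow> 0 - complex_of_real (c (Suc j)) * 0) at_infinity"
    using next_measure.cauchy_transform_bigo_inverse[OF bounded_borel_on_weight[OF j]]
    by (intro tendsto_diff tendsto_mult tendsto_const tendsto_0_if_bigo_inverse_power[OF reduced_H_bigo[OF j]]
        tendsto_0_if_bigo_inverse_power[of _ 0]) simp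
  from Lim_transform_eventually[OF lim ev] have "P = 0"
    unfolding S by (simp add: poly_tendsto_0_at_infinity_imp_zero)
  with P[OF z(1) T] z(2) show ?thesis
    unfolding reduced_H_def by (simp add: field_simps)
qed

lemma moment_weight_eq_0:
  assumes j: "j < m" and "\<nu> < deg_Q"
  shows "moment (\<sigma> (Suc j)) (weight j) \<nu> = 0"
proof -
  interpret next_measure: compactly_supported_measure "\<sigma> (Suc j)" "\<Delta> (Suc j)"
    using j by (intro compactly_supported) auto
  have c: "complex_of_real (c (Suc j)) \<noteq> 0"
    using c_nonzero j by simp
  have ev: "eventually (\<lambda>z. reduced_H j z / complex_of_real (c (Suc j))
      = cauchy_transform (\<sigma> (Suc j)) (weight j) z) at_infinity"
    using eventually_regular_point[OF j]
  proof eventually_elim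
    case (elim z)
    with reduced_H_eq_cauchy_transform[OF j, of z] c show ?case
      by simp
  qed
  have "(\<lambda>z. reduced_H j z / complex_of_real (c (Suc j))) \<in> O[at_infinity](\<lambda>z. 1 / z ^ Suc deg_Q)"
    by (subst landau_o.big.cdiv_in_iff'[OF c]) (rule reduced_H_bigo[OF j])
  then have "cauchy_transform (\<sigma> (Suc j)) (weight j) \<in> O[at_infinity](\<lambda>z. 1 / z ^ Suc deg_Q)"
    by (rule landau_o.big.in_cong[OF ev, THEN iffD1])
  with assms(2) show ?thesis
    by (intro next_measure.moment_eq_0_if_bigo[OF bounded_borel_on_weight[OF j]])
qed

lemma Q_H_ratio_eq_weight:
  assumes "j < m" "x \<in> \<Delta> (Suc j)"
  shows "Q (Suc j) (complex_of_real x) * H (Suc j) (complex_of_real x)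
      / (Q j (complex_of_real x) * Q (j + 2) (complex_of_real x)) = weight j x"
proof (cases "Q (Suc j) (complex_of_real x) = 0")
  case True
  then show ?thesis
    using A_zero_if_Q_zero[OF True] by (simp add: weight_def)
next
  case False
  have "j + 2 = Suc (Suc j)"
    by simp
  with False Q_nonzero_on_next_interval[OF assms] show ?thesis
    unfolding HPH_def weight_def T_factor_def by (cases "j = 0") (simp_all add: field_simps)
qed

lemma borel_measurable_Q: "(\<lambda>x. Q j (complex_of_real x)) \<in> borel_measurable borel"
  unfolding poly_Q_poly[symmetric] by (intro borel_measurable_continuous_onI continuous_intros)

lemma borel_measurable_Q_H_ratio:
  assumes "j < m"
  shows "(\<lambda>x. Q (Suc j) (complex_of_real x) * H (Suc j) (complex_of_real x)
      / (Q j (complex_of_real x) * Q (j + 2) (complex_of_real x))) \<in> borel_measurable borel"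
proof -
  have "nikishin_density \<sigma> c (Suc j) k \<in> borel_measurable borel" if "k \<in> {Suc j..m}" for k
    using bounded_borel_on_nikishin_density[of "Suc j" k] that unfolding bounded_borel_on_def by auto
  then have "(\<lambda>x. A (Suc j) (complex_of_real x)) \<in> borel_measurable borel"
    unfolding A_Suc_eq_sum[OF assms]
    by (intro borel_measurable_sum borel_measurable_times borel_measurable_const borel_measurable_pc) auto
  then show ?thesis
    unfolding HPH_def
    by (intro borel_measurable_divide borel_measurable_times borel_measurable_Q borel_measurable_pc
        measurable_If) auto
qed

lemma orthogonality:
  assumes j: "j < m" and "\<nu> < deg_Q"
  shows "sint \<sigma> c (Suc j) (\<lambda>x. complex_of_real x ^ \<nu> * Q (Suc j) (complex_of_real x) * H (Suc j) (complex_of_real x)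
      / (Q j (complex_of_real x) * Q (j + 2) (complex_of_real x))) = 0"
proof -
  interpret next_measure: compactly_supported_measure "\<sigma> (Suc j)" "\<Delta> (Suc j)"
    using j by (intro compactly_supported) auto
  let ?ratio = "\<lambda>x. Q (Suc j) (complex_of_real x) * H (Suc j) (complex_of_real x)
      / (Q j (complex_of_real x) * Q (j + 2) (complex_of_real x))"
  have "(\<integral>x. complex_of_real x ^ \<nu> * ?ratio x \<partial>\<sigma> (Suc j)) = (\<integral>x. complex_of_real x ^ \<nu> * weight j x \<partial>\<sigma> (Suc j))"
    using bounded_borel_on_weight[OF j] Q_H_ratio_eq_weight[OF j] borel_measurable_Q_H_ratio[OF j]
    by (intro next_measure.integral_cong_support borel_measurable_times borel_measurable_power
        borel_measurable_of_real) (auto simp: bounded_borel_on_def)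
  also have "\<dots> = 0"
    using moment_weight_eq_0[OF assms] unfolding moment_def .
  finally show ?thesis
    unfolding sint_def by (simp add: mult.assoc)
qed

lemma Q_Suc_times_reduced_H_eq_integral:
  assumes j: "j < m" and z: "z \<notin> complex_of_real ` \<Delta> (Suc j)" "Q j z \<noteq> 0"
    and T: "j = 0 \<longrightarrow> pc (bigT t m) z \<noteq> 0"
  shows "Q (Suc j) z * reduced_H j z = sint \<sigma> c (Suc j) (\<lambda>x. Q (Suc j) (complex_of_real x) ^ 2 / (z - complex_of_real x)
      * H (Suc j) (complex_of_real x) / (Q j (complex_of_real x) * Q (j + 2) (complex_of_real x)))"
proof -
  interpret next_measure: compactly_supported_measure "\<sigma> (Suc j)" "\<Delta> (Suc j)"
    using j by (intro compactly_supported) auto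
  let ?ratio = "\<lambda>x. Q (Suc j) (complex_of_real x) * H (Suc j) (complex_of_real x)
      / (Q j (complex_of_real x) * Q (j + 2) (complex_of_real x))"
  have "Q (Suc j) z * reduced_H j z
      = complex_of_real (c (Suc j)) * (poly (Q_poly (Suc j)) z * cauchy_transform (\<sigma> (Suc j)) (weight j) z)"
    by (simp add: reduced_H_eq_cauchy_transform[OF assms] poly_Q_poly)
  also have "poly (Q_poly (Suc j)) z * cauchy_transform (\<sigma> (Suc j)) (weight j) z
      = cauchy_transform (\<sigma> (Suc j)) (\<lambda>x. poly (Q_poly (Suc j)) (complex_of_real x) * weight j x) z"
    using next_measure.poly_times_cauchy_transform[OF bounded_borel_on_weight[OF j] z(1)]
      next_measure.cauchy_remainder_eq_0[OF moment_weight_eq_0[OF j] degree_Q_poly_le]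
    by simp
  also have "\<dots> = (\<integral>x. Q (Suc j) (complex_of_real x) / (z - complex_of_real x) * ?ratio x \<partial>\<sigma> (Suc j))"
    unfolding cauchy_transform_def
  proof (rule next_measure.integral_cong_support)
    show "(\<lambda>x. poly (Q_poly (Suc j)) (complex_of_real x) * weight j x / (z - complex_of_real x))
        \<in> borel_measurable borel"
      using bounded_borel_on_divide[OF bounded_borel_on_mult[OF bounded_borel_on_poly bounded_borel_on_weight[OF j]]
          next_measure.compact z(1)] next_measure.compact
      unfolding bounded_borel_on_def by blast
    show "(\<lambda>x. Q (Suc j) (complex_of_real x) / (z - complex_of_real x) * ?ratio x) \<in> borel_measurable borel"
      by (intro borel_measurable_times borel_measurable_divide borel_measurable_Q borel_measurable_diff
          borel_measurable_const borel_measurable_of_real borel_measurable_Q_H_ratio[OF j])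
  next
    fix x assume "x \<in> \<Delta> (Suc j)"
    then show "poly (Q_poly (Suc j)) (complex_of_real x) * weight j x / (z - complex_of_real x)
        = Q (Suc j) (complex_of_real x) / (z - complex_of_real x) * ?ratio x"
      by (subst Q_H_ratio_eq_weight[OF j]) (simp_all add: poly_Q_poly)
  qed
  finally show ?thesis
    unfolding sint_def by (simp add: power2_eq_square divide_inverse mult_ac)
qed

lemma H_eq_integral:
  assumes "j < m" "j \<noteq> 1" "z \<notin> complex_of_real ` \<Delta> (Suc j)" "Q j z \<noteq> 0"
    and "j = 0 \<longrightarrow> pc (bigT t m) z \<noteq> 0"
  shows "H j z = sint \<sigma> c (Suc j) (\<lambda>x. Q (Suc j) (complex_of_real x) ^ 2 / (z - complex_of_real x)
      * H (Suc j) (complex_of_real x) / (Q j (complex_of_real x) * Q (j + 2) (complex_of_real x)))"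
proof -
  have "H j z = Q (Suc j) z * reduced_H j z"
    using assms(2) unfolding HPH_def reduced_H_def T_factor_def by auto
  also have "\<dots> = sint \<sigma> c (Suc j) (\<lambda>x. Q (Suc j) (complex_of_real x) ^ 2 / (z - complex_of_real x)
      * H (Suc j) (complex_of_real x) / (Q j (complex_of_real x) * Q (j + 2) (complex_of_real x)))"
    using assms(1,3-5) by (rule Q_Suc_times_reduced_H_eq_integral)
  finally show ?thesis .
qed

lemma H_1_eq_integral:
  assumes "2 \<le> m" "z \<notin> complex_of_real ` \<Delta> 2" "Q 1 z \<noteq> 0"
  shows "H 1 z = pc (bigT t m) z * sint \<sigma> c 2 (\<lambda>x. Q 2 (complex_of_real x) ^ 2 / (z - complex_of_real x)
      * H 2 (complex_of_real x) / (Q 1 (complex_of_real x) * Q 3 (complex_of_real x)))"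
proof -
  have "H 1 z = pc (bigT t m) z * (Q (Suc 1) z * reduced_H 1 z)"
    unfolding HPH_def reduced_H_def T_factor_def by simp
  also have "Q (Suc 1) z * reduced_H 1 z = sint \<sigma> c (Suc 1) (\<lambda>x. Q (Suc 1) (complex_of_real x) ^ 2
      / (z - complex_of_real x) * H (Suc 1) (complex_of_real x) / (Q 1 (complex_of_real x) * Q (1 + 2) (complex_of_real x)))"
    using assms by (intro Q_Suc_times_reduced_H_eq_integral) (auto simp: numeral_2_eq_2)
  finally show ?thesis
    by (simp add: numeral_2_eq_2 numeral_3_eq_3)
qed

end

theorem lemma2p2:
  fixes m n N :: nat
    and \<Delta> :: "nat \<Rightarrow> real set"
    and \<sigma> :: "nat \<Rightarrow> real measure" and c :: "nat \<Rightarrow> real"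
    and v t :: "nat \<Rightarrow> real poly"
    and a :: "nat \<Rightarrow> real poly"
  assumes m: "m \<ge> 1"
    and intervals: "\<forall>j\<in>{1..m}. \<exists>\<alpha> \<beta>. \<alpha> \<le> \<beta> \<and> \<Delta> j = {\<alpha>..\<beta>}"
    and disj: "\<forall>j. 1 \<le> j \<and> j < m \<longrightarrow> \<Delta> j \<inter> \<Delta> (Suc j) = {}"
    and meas: "\<forall>j\<in>{1..m}. sets (\<sigma> j) = sets borel \<and> finite_measure (\<sigma> j)
                 \<and> (c j = 1 \<or> c j = -1) \<and> infinite (msupp (\<sigma> j))
                 \<and> convex hull (msupp (\<sigma> j)) = \<Delta> j"
    and rat: "\<forall>k\<in>{1..m}. lead_coeff (t k) = 1 \<and> degree (v k) < degree (t k) \<and> coprime (v k) (t k)"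
    and T_zeros: "\<forall>z. pc (bigT t m) z = 0 \<longrightarrow> z \<notin> complex_of_real ` (\<Delta> 1 \<union> \<Delta> m)"
    and f_poles: "finite {p. p \<notin> complex_of_real ` \<Delta> m \<and> is_pole (ffun \<sigma> c v t m) p}
      \<and> (\<Sum>p\<in>{p. p \<notin> complex_of_real ` \<Delta> m \<and> is_pole (ffun \<sigma> c v t m) p}.
            nat (- zorder (ffun \<sigma> c v t m) p)) = degree (bigT t m)"
    and N: "N \<ge> degree (bigT t m)"
    and N_props: "\<forall>n'>N. \<forall>b. HP_sol \<sigma> c v t m n' b \<longrightarrow>
         degree (b m) = n'
         \<and> (\<forall>b'. HP_sol \<sigma> c v t m n' b' \<longrightarrow> (\<exists>\<kappa>. \<kappa> \<noteq> 0 \<and> (\<forall>j\<le>m. b' j = smult \<kappa> (b j))))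
         \<and> HP_zero_props \<sigma> c v t m \<Delta> n' b"
    and n: "n > N"
    and a: "HP_sol \<sigma> c v t m n a" and a_monic: "lead_coeff (a m) = 1"
  shows "(\<forall>j<m. \<forall>\<nu><n - degree (bigT t m).
            sint \<sigma> c (Suc j) (\<lambda>x. complex_of_real x ^ \<nu> * HPQ \<sigma> c v t m \<Delta> a (Suc j) (complex_of_real x)
               * HPH \<sigma> c v t m \<Delta> a (Suc j) (complex_of_real x)
               / (HPQ \<sigma> c v t m \<Delta> a j (complex_of_real x) * HPQ \<sigma> c v t m \<Delta> a (j + 2) (complex_of_real x))) = 0)
    \<and> (\<forall>j<m. j \<noteq> 1 \<longrightarrow> (\<forall>z. z \<notin> complex_of_real ` \<Delta> (Suc j) \<and> HPQ \<sigma> c v t m \<Delta> a j z \<noteq> 0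
              \<and> (j = 0 \<longrightarrow> pc (bigT t m) z \<noteq> 0) \<longrightarrow>
            HPH \<sigma> c v t m \<Delta> a j z =
            sint \<sigma> c (Suc j) (\<lambda>x. HPQ \<sigma> c v t m \<Delta> a (Suc j) (complex_of_real x) ^ 2 / (z - complex_of_real x)
               * HPH \<sigma> c v t m \<Delta> a (Suc j) (complex_of_real x)
               / (HPQ \<sigma> c v t m \<Delta> a j (complex_of_real x) * HPQ \<sigma> c v t m \<Delta> a (j + 2) (complex_of_real x)))))
    \<and> (m \<ge> 2 \<longrightarrow> (\<forall>z. z \<notin> complex_of_real ` \<Delta> 2 \<and> HPQ \<sigma> c v t m \<Delta> a 1 z \<noteq> 0 \<longrightarrow>
            HPH \<sigma> c v t m \<Delta> a 1 z = pc (bigT t m) z *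
            sint \<sigma> c 2 (\<lambda>x. HPQ \<sigma> c v t m \<Delta> a 2 (complex_of_real x) ^ 2 / (z - complex_of_real x)
               * HPH \<sigma> c v t m \<Delta> a 2 (complex_of_real x)
               / (HPQ \<sigma> c v t m \<Delta> a 1 (complex_of_real x) * HPQ \<sigma> c v t m \<Delta> a 3 (complex_of_real x)))))"
proof -
  interpret hermite_pade m \<Delta> \<sigma> c v t n a
  proof (intro hermite_pade.intro nikishin_system.intro hermite_pade_axioms.intro)
    show "compactly_supported_measure (\<sigma> j) (\<Delta> j)" if j: "j \<in> {1..m}" for j
      using bspec[OF intervals j] bspec[OF meas j] by (auto intro: compactly_supported_measure_on_hull)
    show "c j \<noteq> 0" "t j \<noteq> 0" if j: "j \<in> {1..m}" for j
      using bspec[OF meas j] bspec[OF rat j] by auto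
    show "HP_zero_props \<sigma> c v t m \<Delta> n a"
      using N_props n a by blast
  qed (use m disj N n a in auto)
  show ?thesis
    by (blast intro: orthogonality H_eq_integral H_1_eq_integral)
qed

end
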